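(* Let $H$ be a complex Hilbert space and let $U_0(H)$ be the set of unitary operators on $H$ which fix each element of the orthogonal complement of some finite-dimensional subspace of $H$. Then $d(u,v) := \mathrm{rank}(u - v)$ defines a distance on $U_0(H)$ with values in the nonnegative integers. Moreover, if $F \subset E$ are finite-dimensional subspaces of $H$ and $u$ is a unitary operator fixing each element of $E^{\perp}$, then $\pi_{E,F}(u)$ is the unique unitary operator fixing each element of $F^{\perp}$ for which $d(u, \pi_{E,F}(u))$ is minimal (among unitary operators fixing each element of $F^\perp$); the image of $H$ by $u - \pi_{E,F}(u)$ equals the image of $F^{\perp}$ by $u - \mathrm{Id}$; and $$d(u, \pi_{E,F}(u)) = \dim(E) - \dim(F) - \dim(\{x \in E \cap F^{\perp} : u(x) = x\}).$$ In particular, if no nonzero $x \in E\cap F^\perp$ satisfies $u(x)=x$, then $d(u,\pi_{E,F}(u)) = \dim(E) - \dim(F)$.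
   Context: For a complex Hilbert space $H$, a finite-dimensional subspace $E$, a subspace $F\subset E$ and a unitary $u$ on $H$ fixing each element of $E^\perp$, $\pi_{E,F}(u)$ denotes the unique unitary operator on $H$ which fixes each element of $F^\perp$ and such that the image of $H$ by $u-\pi_{E,F}(u)$ is included in the image of $F^\perp$ by $u-\mathrm{Id}$ (existence and uniqueness are known). *)

theory Defs
  imports "HOL-Analysis.Analysis"
begin

text \<open>A complex Hilbert space is modelled as a type 'a (an additive abelian group)
together with a complex scalar multiplication sc and an inner product ip,
conjugate-linear in the first argument, linear in the second.\<close>

definition cnorm :: "('a \<Rightarrow> 'a \<Rightarrow> complex) \<Rightarrow> 'a \<Rightarrow> real" where
  "cnorm ip x = sqrt (Re (ip x x))"

definition complex_hilbert_space ::
  "(complex \<Rightarrow> 'a::ab_group_add \<Rightarrow> 'a) \<Rightarrow> ('a \<Rightarrow> 'a \<Rightarrow> complex) \<Rightarrow> bool" where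
  "complex_hilbert_space sc ip \<longleftrightarrow>
     vector_space sc \<and>
     (\<forall>x y z. ip x (y + z) = ip x y + ip x z) \<and>
     (\<forall>c x y. ip x (sc c y) = c * ip x y) \<and>
     (\<forall>x y. ip y x = cnj (ip x y)) \<and>
     (\<forall>x. Im (ip x x) = 0 \<and> Re (ip x x) \<ge> 0) \<and>
     (\<forall>x. ip x x = 0 \<longrightarrow> x = 0) \<and>
     (\<forall>X :: nat \<Rightarrow> 'a.
        (\<forall>e>0. \<exists>N. \<forall>m\<ge>N. \<forall>n\<ge>N. cnorm ip (X m - X n) < e) \<longrightarrow>
        (\<exists>l. \<forall>e>0. \<exists>N. \<forall>n\<ge>N. cnorm ip (X n - l) < e))"

definition fin_dim_subspace :: "(complex \<Rightarrow> 'a::ab_group_add \<Rightarrow> 'a) \<Rightarrow> 'a set \<Rightarrow> bool" where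
  "fin_dim_subspace sc E \<longleftrightarrow> module.subspace sc E \<and> (\<exists>B. finite B \<and> module.span sc B = E)"

definition orth :: "('a \<Rightarrow> 'a \<Rightarrow> complex) \<Rightarrow> 'a set \<Rightarrow> 'a set" where
  "orth ip S = {x. \<forall>y\<in>S. ip y x = 0}"

definition unitary_op ::
  "(complex \<Rightarrow> 'a::ab_group_add \<Rightarrow> 'a) \<Rightarrow> ('a \<Rightarrow> 'a \<Rightarrow> complex) \<Rightarrow> ('a \<Rightarrow> 'a) \<Rightarrow> bool" where
  "unitary_op sc ip u \<longleftrightarrow> Vector_Spaces.linear sc sc u \<and> bij u \<and> (\<forall>x y. ip (u x) (u y) = ip x y)"

definition fixes_perp :: "('a \<Rightarrow> 'a \<Rightarrow> complex) \<Rightarrow> ('a \<Rightarrow> 'a) \<Rightarrow> 'a set \<Rightarrow> bool" where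
  "fixes_perp ip u E \<longleftrightarrow> (\<forall>x\<in>orth ip E. u x = x)"

definition U0 :: "(complex \<Rightarrow> 'a::ab_group_add \<Rightarrow> 'a) \<Rightarrow> ('a \<Rightarrow> 'a \<Rightarrow> complex) \<Rightarrow> ('a \<Rightarrow> 'a) set" where
  "U0 sc ip = {u. unitary_op sc ip u \<and> (\<exists>E. fin_dim_subspace sc E \<and> fixes_perp ip u E)}"

definition dist_rank :: "(complex \<Rightarrow> 'a::ab_group_add \<Rightarrow> 'a) \<Rightarrow> ('a \<Rightarrow> 'a) \<Rightarrow> ('a \<Rightarrow> 'a) \<Rightarrow> nat" where
  "dist_rank sc u v = vector_space.dim sc (range (\<lambda>x. u x - v x))"

definition pi_EF ::
  "(complex \<Rightarrow> 'a::ab_group_add \<Rightarrow> 'a) \<Rightarrow> ('a \<Rightarrow> 'a \<Rightarrow> complex) \<Rightarrow> 'a set \<Rightarrow> 'a set \<Rightarrow> ('a \<Rightarrow> 'a) \<Rightarrow> ('a \<Rightarrow> 'a)" where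
  "pi_EF sc ip E F u = (THE w. unitary_op sc ip w \<and> fixes_perp ip w F \<and>
      range (\<lambda>x. u x - w x) \<subseteq> (\<lambda>x. u x - x) ` orth ip F)"

end

theory Submission
  imports Defs
begin

text \<open>
  Fix \<open>F \<subseteq> E\<close> and \<open>u\<close> fixing \<open>E\<^sup>\<perp>\<close>, and let \<open>V = (u - 1)(F\<^sup>\<perp>)\<close>; it equals
  \<open>(u - 1)(E \<inter> F\<^sup>\<perp>)\<close>, so it is finite-dimensional. Every unitary \<open>w\<close> fixing \<open>F\<^sup>\<perp>\<close> has
  \<open>range (u - w) \<supseteq> V\<close>, so \<open>rank (u - w) \<ge> dim V\<close>. Since \<open>u\<close> is isometric, \<open>F \<inter> V = 0\<close>
  and \<open>u(F) \<subseteq> F \<oplus> V\<close>; hence every \<open>x\<close> has a unique \<open>z\<close> with \<open>z - x \<in> F\<close> and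
  \<open>u x - z \<in> V\<close>, and \<open>x \<mapsto> z\<close> is a unitary fixing \<open>F\<^sup>\<perp>\<close> with \<open>range (u - z) = V\<close>. It is
  therefore \<open>\<pi>\<^sub>E\<^sub>,\<^sub>F(u)\<close> and realises the minimum; a competitor of rank at most \<open>dim V\<close>
  has range exactly \<open>V\<close>, which forces it to be \<open>\<pi>\<^sub>E\<^sub>,\<^sub>F(u)\<close>. The dimension formula is
  rank-nullity for the orthogonal projection onto \<open>F\<close> on \<open>E\<close>, and for \<open>u - 1\<close> on
  \<open>E \<inter> F\<^sup>\<perp>\<close>. The distance axioms follow from \<open>u - w = (u - v) + (v - w)\<close>.
\<close>

subsection \<open>Finite-dimensional subspaces\<close>

definition finite_dim :: "('a::field \<Rightarrow> 'b::ab_group_add \<Rightarrow> 'b) \<Rightarrow> 'b set \<Rightarrow> bool" where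
  "finite_dim s S \<longleftrightarrow> (\<exists>B. finite B \<and> module.span s B = S)"

context vector_space
begin

lemma finite_dim_subspace: "finite_dim scale S \<Longrightarrow> subspace S"
  unfolding finite_dim_def by auto

lemma finite_dim_span: "finite B \<Longrightarrow> finite_dim scale (span B)"
  unfolding finite_dim_def by auto

lemma finite_dim_basis:
  assumes "finite_dim scale S"
  obtains C where "C \<subseteq> S" "independent C" "finite C" "span C = S" "card C = dim S"
proof -
  obtain B where B: "finite B" "span B = S"
    using assms unfolding finite_dim_def by auto
  obtain C where C: "C \<subseteq> S" "independent C" "S \<subseteq> span C" "card C = dim S"
    using basis_exists by blast
  have "finite C"
    using independent_span_bound[OF B(1) C(2)] C(1) B(2) by auto
  moreover have "span C = S"
    using span_subspace[OF C(1) C(3)] B(2) by blast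
  ultimately show ?thesis
    using C that by blast
qed

lemma finite_dim_subset:
  assumes "finite_dim scale T" "subspace S" "S \<subseteq> T"
  shows "finite_dim scale S"
proof -
  obtain B where B: "finite B" "span B = T"
    using assms(1) unfolding finite_dim_def by auto
  obtain C where C: "C \<subseteq> S" "independent C" "S \<subseteq> span C"
    using basis_exists by metis
  have "C \<subseteq> span B"
    using C(1) assms(3) B(2) by blast
  then have "finite C"
    using independent_span_bound[OF B(1) C(2)] by blast
  moreover have "span C = S"
    using span_subspace[OF C(1) C(3) assms(2)] .
  ultimately show ?thesis
    unfolding finite_dim_def by blast
qed

lemma finite_dim_image:
  assumes "Vector_Spaces.linear scale scale f" "finite_dim scale S"
  shows "finite_dim scale (f ` S)"
proof -
  interpret f: Vector_Spaces.linear scale scale f by fact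
  obtain B where B: "finite B" "span B = S"
    using assms(2) unfolding finite_dim_def by auto
  then have "span (f ` B) = f ` S"
    using f.span_image by simp
  then show ?thesis
    using finite_imageI[OF B(1)] unfolding finite_dim_def by blast
qed

lemma finite_dim_span_Un:
  assumes "finite_dim scale S" "finite_dim scale T"
  shows "finite_dim scale (span (S \<union> T))"
proof -
  obtain B C where B: "finite B" "span B = S" and C: "finite C" "span C = T"
    using assms unfolding finite_dim_def by auto
  have "span (S \<union> T) = span (B \<union> C)"
    unfolding span_eq
  proof
    show "S \<union> T \<subseteq> span (B \<union> C)"
      using B(2) C(2) span_mono[of B "B \<union> C"] span_mono[of C "B \<union> C"] by auto
    show "B \<union> C \<subseteq> span (S \<union> T)"
      using B(2) C(2) span_superset[of B] span_superset[of C] span_superset[of "S \<union> T"] by blast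
  qed
  then show ?thesis
    using B(1) C(1) finite_dim_span by simp
qed

lemma dim_le_finite_dim:
  assumes "finite_dim scale T" "S \<subseteq> T"
  shows "dim S \<le> dim T"
proof -
  obtain C where "finite C" "span C = T" "card C = dim T"
    using finite_dim_basis[OF assms(1)] by metis
  then show ?thesis
    using dim_le_card[of S C] assms(2) by auto
qed

lemma subspace_eq_if_dim_le:
  assumes "finite_dim scale T" "subspace S" "S \<subseteq> T" "dim T \<le> dim S"
  shows "S = T"
proof -
  obtain CS where CS: "CS \<subseteq> S" "independent CS" "span CS = S" "card CS = dim S"
    using finite_dim_basis[OF finite_dim_subset[OF assms(1-3)]] by metis
  obtain CT where CT: "CS \<subseteq> CT" "CT \<subseteq> T" "independent CT" "T \<subseteq> span CT"
    using maximal_independent_subset_extend[of CS T] CS(1,2) assms(3) by blast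
  obtain B where B: "finite B" "span B = T"
    using assms(1) unfolding finite_dim_def by auto
  have "finite CT"
    using independent_span_bound[OF B(1) CT(3)] CT(2) B(2) span_superset by blast
  moreover have "card CT = dim T"
    using basis_card_eq_dim CT by blast
  ultimately have "CS = CT"
    using card_subset_eq[OF _ CT(1)] card_mono[OF _ CT(1)] CS(4) assms(4) by fastforce
  then show ?thesis
    using CT(4) CS(3) assms(3) by blast
qed

lemma dim_eq_0_if_subset_zero: "S \<subseteq> {0} \<Longrightarrow> dim S = 0"
  using dim_le_card[of S "{}"] by simp

lemma finite_dim_dim_eq_0_iff:
  assumes "finite_dim scale S"
  shows "dim S = 0 \<longleftrightarrow> S \<subseteq> {0}"
proof
  assume "dim S = 0"
  obtain C where "finite C" "span C = S" "card C = dim S"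
    using finite_dim_basis[OF assms] by metis
  with \<open>dim S = 0\<close> show "S \<subseteq> {0}"
    by auto
next
  assume "S \<subseteq> {0}"
  then show "dim S = 0"
    by (rule dim_eq_0_if_subset_zero)
qed

lemma dim_span_Un_le:
  assumes "finite_dim scale S" "finite_dim scale T"
  shows "dim (span (S \<union> T)) \<le> dim S + dim T"
proof -
  obtain C where C: "finite C" "span C = S" "card C = dim S"
    using finite_dim_basis[OF assms(1)] by metis
  obtain D where D: "finite D" "span D = T" "card D = dim T"
    using finite_dim_basis[OF assms(2)] by metis
  have "S \<union> T \<subseteq> span (C \<union> D)"
    using C(2) D(2) span_mono[of C "C \<union> D"] span_mono[of D "C \<union> D"] by auto
  then have "span (S \<union> T) \<subseteq> span (C \<union> D)"
    using span_minimal subspace_span by blast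
  then have "dim (span (S \<union> T)) \<le> card (C \<union> D)"
    using dim_le_card C(1) D(1) by blast
  also have "\<dots> \<le> card C + card D"
    by (rule card_Un_le)
  finally show ?thesis
    using C D by simp
qed

lemma span_Int_span_independent:
  assumes "independent (A \<union> B)" "A \<inter> B = {}" "finite A" "finite B"
    and "x \<in> span A" "x \<in> span B"
  shows "x = 0"
proof -
  obtain a where a: "x = (\<Sum>v\<in>A. a v *s v)"
    using assms(5) span_finite[OF assms(3)] by auto
  obtain b where b: "x = (\<Sum>v\<in>B. b v *s v)"
    using assms(6) span_finite[OF assms(4)] by auto
  define c where "c v = (if v \<in> A then a v else - b v)" for v
  have "(\<Sum>v\<in>A \<union> B. c v *s v) = (\<Sum>v\<in>A. c v *s v) + (\<Sum>v\<in>B. c v *s v)"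
    using assms by (simp add: sum.union_disjoint)
  also have "(\<Sum>v\<in>A. c v *s v) = x"
    unfolding a c_def by simp
  also have "(\<Sum>v\<in>B. c v *s v) = (\<Sum>v\<in>B. - (b v *s v))"
    using assms(2) by (intro sum.cong) (auto simp: c_def scale_minus_left)
  also have "\<dots> = - x"
    unfolding b by (simp add: sum_negf)
  finally have "(\<Sum>v\<in>A \<union> B. c v *s v) = 0"
    by simp
  then have "\<forall>v\<in>A. c v = 0"
    using independentD[OF assms(1), of "A \<union> B" c] assms(3,4) by auto
  then show ?thesis
    unfolding a c_def by simp
qed

lemma rank_nullity:
  assumes lin: "Vector_Spaces.linear scale scale T" and S: "finite_dim scale S"
  shows "dim S = dim (T ` S) + dim {x \<in> S. T x = 0}"
proof -
  interpret T: Vector_Spaces.linear scale scale T by fact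
  define K where "K = {x \<in> S. T x = 0}"
  have "K \<subseteq> S"
    unfolding K_def by auto
  obtain BK where BK: "BK \<subseteq> K" "independent BK" "K \<subseteq> span BK" "card BK = dim K"
    using basis_exists by metis
  have "BK \<subseteq> S"
    using BK(1) \<open>K \<subseteq> S\<close> by blast
  obtain BS where BS: "BK \<subseteq> BS" "BS \<subseteq> S" "independent BS" "S \<subseteq> span BS"
    by (rule maximal_independent_subset_extend[OF \<open>BK \<subseteq> S\<close> BK(2)])
  obtain B0 where B0: "finite B0" "span B0 = S"
    using S unfolding finite_dim_def by auto
  have "finite BS"
    using independent_span_bound[OF B0(1) BS(3)] BS(2) B0(2) by blast
  define C where "C = BS - BK"
  have C: "finite C" "finite BK" "C \<union> BK = BS" "C \<inter> BK = {}" "C \<subseteq> S"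
    using \<open>finite BS\<close> BS(1,2) rev_finite_subset unfolding C_def by blast+
  have "span C \<subseteq> S"
    using C(5) finite_dim_subspace[OF S] span_minimal by blast
  have inj: "inj_on T (span C)"
    unfolding T.inj_on_iff_eq_0[OF subspace_span]
  proof (intro ballI impI)
    fix x assume x: "x \<in> span C" "T x = 0"
    then have "x \<in> span BK"
      using \<open>span C \<subseteq> S\<close> BK(3) unfolding K_def by blast
    then show "x = 0"
      using span_Int_span_independent[of C BK x] C BS(3) x(1) by simp
  qed
  have indep: "independent (T ` C)"
    using T.independent_injective_image[OF _ inj] independent_mono[OF BS(3)] C_def by blast
  have "T ` BS \<subseteq> span (T ` C)"
  proof
    fix y assume "y \<in> T ` BS"
    then obtain b where b: "b \<in> BS" "y = T b"
      by blast
    show "y \<in> span (T ` C)"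
    proof (cases "b \<in> BK")
      case True
      then show ?thesis
        using b(2) BK(1) span_zero unfolding K_def by auto
    next
      case False
      then have "T b \<in> T ` C"
        using b(1) unfolding C_def by blast
      then show ?thesis
        using b(2) span_base by simp
    qed
  qed
  have "T ` S \<subseteq> T ` span BS"
    using BS(4) by (rule image_mono)
  also have "\<dots> = span (T ` BS)"
    by (rule T.span_image[symmetric])
  also have "\<dots> \<subseteq> span (T ` C)"
    using span_minimal[OF \<open>T ` BS \<subseteq> span (T ` C)\<close> subspace_span] .
  finally have "T ` S \<subseteq> span (T ` C)" .
  then have "card (T ` C) = dim (T ` S)"
    by (rule basis_card_eq_dim[OF image_mono[OF C(5)] _ indep])
  moreover have "card (T ` C) = card C"
    by (rule card_image[OF inj_on_subset[OF inj span_superset]])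
  moreover have "card C + card BK = card BS"
    using card_Un_disjoint[OF C(1,2,4)] C(3) by simp
  moreover have "card BS = dim S"
    by (rule basis_card_eq_dim[OF BS(2,4,3)])
  ultimately show ?thesis
    using BK(4) unfolding K_def by linarith
qed

lemma dim_range_diff_0_iff:
  assumes "finite_dim scale (range (\<lambda>x. f x - g x))"
  shows "dim (range (\<lambda>x. f x - g x)) = 0 \<longleftrightarrow> f = g"
proof -
  have "range (\<lambda>x. f x - g x) \<subseteq> {0} \<longleftrightarrow> (\<forall>x. f x - g x = 0)"
    by blast
  then show ?thesis
    using finite_dim_dim_eq_0_iff[OF assms] by (simp add: fun_eq_iff)
qed

lemma dim_range_diff_commute:
  "dim (range (\<lambda>x. g x - f x)) = dim (range (\<lambda>x. f x - g x))"
proof (rule span_eq_dim)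
  have "g x - f x \<in> span (range (\<lambda>x. f x - g x))" "f x - g x \<in> span (range (\<lambda>x. g x - f x))"
    for x
    using span_neg[OF span_base[OF rangeI[of "\<lambda>x. f x - g x" x]]]
      span_neg[OF span_base[OF rangeI[of "\<lambda>x. g x - f x" x]]]
    by simp_all
  then show "span (range (\<lambda>x. g x - f x)) = span (range (\<lambda>x. f x - g x))"
    unfolding span_eq by blast
qed

lemma dim_range_diff_triangle:
  assumes "finite_dim scale (range (\<lambda>x. f x - g x))" "finite_dim scale (range (\<lambda>x. g x - h x))"
  shows "dim (range (\<lambda>x. f x - h x))
    \<le> dim (range (\<lambda>x. f x - g x)) + dim (range (\<lambda>x. g x - h x))"
proof -
  let ?W = "span (range (\<lambda>x. f x - g x) \<union> range (\<lambda>x. g x - h x))"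
  have "(f x - g x) + (g x - h x) \<in> ?W" for x
    by (intro span_add span_base) auto
  then have "range (\<lambda>x. f x - h x) \<subseteq> ?W"
    by auto
  then have "dim (range (\<lambda>x. f x - h x)) \<le> dim ?W"
    using dim_le_finite_dim finite_dim_span_Un[OF assms] by blast
  also have "\<dots> \<le> dim (range (\<lambda>x. f x - g x)) + dim (range (\<lambda>x. g x - h x))"
    using dim_span_Un_le[OF assms] .
  finally show ?thesis .
qed

end

locale complex_inner_space = vector_space sc for sc :: "complex \<Rightarrow> 'a::ab_group_add \<Rightarrow> 'a" +
  fixes ip :: "'a \<Rightarrow> 'a \<Rightarrow> complex"
  assumes ip_add_right: "ip x (y + z) = ip x y + ip x z"
    and ip_scale_right: "ip x (sc c y) = c * ip x y"
    and ip_cnj_commute: "ip y x = cnj (ip x y)"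
    and ip_self_eq_0D: "ip x x = 0 \<Longrightarrow> x = 0"

lemma complex_hilbert_space_imp_complex_inner_space:
  "complex_hilbert_space sc ip \<Longrightarrow> complex_inner_space sc ip"
  unfolding complex_hilbert_space_def complex_inner_space_def complex_inner_space_axioms_def
  by (elim conjE) (intro conjI; blast)

context complex_inner_space
begin

lemma ip_add_left: "ip (x + y) z = ip x z + ip y z"
  using ip_cnj_commute[of "x + y" z] ip_cnj_commute[of x z] ip_cnj_commute[of y z]
  by (simp add: ip_add_right)

lemma ip_scale_left: "ip (sc c x) y = cnj c * ip x y"
  using ip_cnj_commute[of "sc c x" y] ip_cnj_commute[of x y] by (simp add: ip_scale_right)

lemma ip_zero_right [simp]: "ip x 0 = 0"
  using ip_add_right[of x 0 0] by simp

lemma ip_zero_left [simp]: "ip 0 x = 0"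
  using ip_add_left[of 0 0 x] by simp

lemma ip_minus_right: "ip x (- y) = - ip x y"
  using ip_add_right[of x y "- y"] by (simp add: eq_neg_iff_add_eq_0 add.commute)

lemma ip_minus_left: "ip (- x) y = - ip x y"
  using ip_add_left[of x "- x" y] by (simp add: eq_neg_iff_add_eq_0 add.commute)

lemma ip_diff_right: "ip x (y - z) = ip x y - ip x z"
  using ip_add_right[of x y "- z"] ip_minus_right by simp

lemma ip_diff_left: "ip (x - y) z = ip x z - ip y z"
  using ip_add_left[of x "- y" z] ip_minus_left by simp

lemmas ip_simps = ip_add_left ip_add_right ip_diff_left ip_diff_right
  ip_minus_left ip_minus_right ip_scale_left ip_scale_right

lemma ip_self_eq_0 [simp]: "ip x x = 0 \<longleftrightarrow> x = 0"
  using ip_self_eq_0D by auto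

lemma fin_dim_subspace_iff: "fin_dim_subspace sc S \<longleftrightarrow> finite_dim sc S"
  unfolding fin_dim_subspace_def finite_dim_def by auto

subsection \<open>Orthogonal complements\<close>

lemma orthD: "x \<in> orth ip S \<Longrightarrow> y \<in> S \<Longrightarrow> ip y x = 0"
  unfolding orth_def by auto

lemma orthD': "x \<in> orth ip S \<Longrightarrow> y \<in> S \<Longrightarrow> ip x y = 0"
  using orthD[of x S y] ip_cnj_commute[of x y] by simp

lemma subspace_orth: "subspace (orth ip S)"
  unfolding subspace_def orth_def by (auto simp: ip_simps)

lemma orth_antimono: "S \<subseteq> T \<Longrightarrow> orth ip T \<subseteq> orth ip S"
  unfolding orth_def by auto

lemma orth_span [simp]: "orth ip (span S) = orth ip S"
proof
  show "orth ip (span S) \<subseteq> orth ip S"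
    by (rule orth_antimono[OF span_superset])
  show "orth ip S \<subseteq> orth ip (span S)"
  proof
    fix x assume x: "x \<in> orth ip S"
    have "S \<subseteq> {y. ip y x = 0}"
      using x unfolding orth_def by blast
    moreover have "subspace {y. ip y x = 0}"
      unfolding subspace_def by (auto simp: ip_simps)
    ultimately have "span S \<subseteq> {y. ip y x = 0}"
      by (rule span_minimal)
    then show "x \<in> orth ip (span S)"
      unfolding orth_def by auto
  qed
qed

lemma in_orth_selfD: "x \<in> S \<Longrightarrow> x \<in> orth ip S \<Longrightarrow> x = 0"
  using orthD[of x S x] by simp

lemma ip_add_orth:
  assumes "a \<in> S" "a' \<in> S" "b \<in> orth ip S" "b' \<in> orth ip S"
  shows "ip (a + b) (a' + b') = ip a a' + ip b b'"
  using orthD[OF assms(4) assms(1)] orthD'[OF assms(3) assms(2)] by (simp add: ip_simps)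

text \<open>The Gram-Schmidt step: subtract from \<open>x\<close> its component along \<open>c = b - e\<^sub>b\<close>, where
  \<open>e\<^sub>b\<close> is the component of \<open>b\<close> in \<open>span B\<close>.\<close>

lemma orth_decomposition_insert:
  assumes IH: "\<And>x. \<exists>e\<in>span B. x - e \<in> orth ip B"
  shows "\<exists>e\<in>span (insert b B). x - e \<in> orth ip (insert b B)"
proof -
  obtain eb where eb: "eb \<in> span B" "b - eb \<in> orth ip (span B)"
    using IH by auto
  obtain ex where ex: "ex \<in> span B" "x - ex \<in> orth ip (span B)"
    using IH by auto
  have sub: "span B \<subseteq> span (insert b B)"
    by (rule span_mono) auto
  define c where "c = b - eb"
  show ?thesis
  proof (cases "c = 0")
    case True
    then have span_eq: "span (insert b B) = span B"
      using eb(1) span_redundant unfolding c_def by simp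
    have "orth ip (insert b B) = orth ip (span (insert b B))"
      by simp
    also have "\<dots> = orth ip (span B)"
      by (simp only: span_eq)
    finally show ?thesis
      using ex span_eq by auto
  next
    case False
    define e where "e = ex + sc (ip c x / ip c c) c"
    have cB: "c \<in> orth ip (span B)"
      using eb(2) unfolding c_def .
    have "c \<in> span (insert b B)"
      unfolding c_def using sub eb(1) by (intro span_diff) (auto intro: span_base)
    then have "e \<in> span (insert b B)"
      unfolding e_def using sub ex(1) by (intro span_add span_scale) auto
    have "ip y (x - e) = 0" if "y \<in> span B" for y
      using orthD[OF ex(2) that] orthD[OF cB that] by (simp add: e_def ip_simps algebra_simps)
    moreover have "ip c (x - e) = 0"
      using orthD'[OF cB ex(1)] False by (simp add: e_def ip_simps algebra_simps)
    moreover have "b = c + eb"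
      unfolding c_def by simp
    ultimately have "x - e \<in> orth ip (insert b B)"
      unfolding orth_def using eb(1) span_base[of _ B] by (auto simp: ip_add_left)
    with \<open>e \<in> span (insert b B)\<close> show ?thesis
      by blast
  qed
qed

lemma orth_decomposition:
  assumes "finite_dim sc S"
  shows "\<exists>e\<in>S. x - e \<in> orth ip S"
proof -
  obtain B where "finite B" "span B = S"
    using assms unfolding finite_dim_def by auto
  moreover have "\<exists>e\<in>span B. x - e \<in> orth ip B" if "finite B" for B x
    using that
  proof (induction B arbitrary: x rule: finite_induct)
    case empty
    then show ?case by (auto simp: orth_def)
  next
    case (insert b B)
    show ?case
      by (rule orth_decomposition_insert[OF insert.IH])
  qed
  ultimately show ?thesis
    by auto
qed

lemma orth_orth_subset:
  assumes "finite_dim sc S"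
  shows "orth ip (orth ip S) \<subseteq> S"
proof
  fix x assume x: "x \<in> orth ip (orth ip S)"
  obtain e where e: "e \<in> S" "x - e \<in> orth ip S"
    using orth_decomposition[OF assms] by blast
  have "ip (x - e) (x - e) = 0"
    using orthD[OF x e(2)] orthD'[OF e(2) e(1)] by (simp add: ip_simps)
  then show "x \<in> S"
    using e(1) by simp
qed

lemma orth_decomposition_unique:
  assumes "subspace S" "e \<in> S" "x - e \<in> orth ip S" "e' \<in> S" "x - e' \<in> orth ip S"
  shows "e = e'"
proof -
  have "e - e' = (x - e') - (x - e)"
    by (simp add: algebra_simps)
  then have "e - e' \<in> orth ip S"
    using subspace_diff[OF subspace_orth assms(5,3)] by simp
  moreover have "e - e' \<in> S"
    using subspace_diff[OF assms(1,2,4)] .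
  ultimately show ?thesis
    using in_orth_selfD[of "e - e'" S] by simp
qed

definition orth_proj :: "'a set \<Rightarrow> 'a \<Rightarrow> 'a" where
  "orth_proj S x = (THE e. e \<in> S \<and> x - e \<in> orth ip S)"

lemma orth_proj:
  assumes "finite_dim sc S"
  shows "orth_proj S x \<in> S" "x - orth_proj S x \<in> orth ip S"
proof -
  have "\<exists>!e. e \<in> S \<and> x - e \<in> orth ip S"
    using orth_decomposition[OF assms]
      orth_decomposition_unique[OF finite_dim_subspace[OF assms]] by blast
  then show "orth_proj S x \<in> S" "x - orth_proj S x \<in> orth ip S"
    using theI'[of "\<lambda>e. e \<in> S \<and> x - e \<in> orth ip S"] unfolding orth_proj_def by blast+
qed

lemma orth_proj_eq:
  assumes "finite_dim sc S" "e \<in> S" "x - e \<in> orth ip S"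
  shows "orth_proj S x = e"
  using orth_decomposition_unique[OF finite_dim_subspace[OF assms(1)] orth_proj[OF assms(1)]
      assms(2,3)] .

lemma linear_orth_proj:
  assumes "finite_dim sc S"
  shows "Vector_Spaces.linear sc sc (orth_proj S)"
proof -
  have S: "subspace S"
    using finite_dim_subspace[OF assms] .
  note P = orth_proj[OF assms]
  have "orth_proj S (x + y) = orth_proj S x + orth_proj S y" for x y
  proof (rule orth_proj_eq[OF assms])
    show "orth_proj S x + orth_proj S y \<in> S"
      using P subspace_add[OF S] by blast
    have "(x - orth_proj S x) + (y - orth_proj S y) \<in> orth ip S"
      using P subspace_add[OF subspace_orth] by blast
    then show "x + y - (orth_proj S x + orth_proj S y) \<in> orth ip S"
      by (simp add: algebra_simps)
  qed
  moreover have "orth_proj S (sc c x) = sc c (orth_proj S x)" for c x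
  proof (rule orth_proj_eq[OF assms])
    show "sc c (orth_proj S x) \<in> S"
      using P subspace_scale[OF S] by blast
    have "sc c (x - orth_proj S x) \<in> orth ip S"
      using P subspace_scale[OF subspace_orth] by blast
    then show "sc c x - sc c (orth_proj S x) \<in> orth ip S"
      by (simp add: scale_right_diff_distrib)
  qed
  ultimately show ?thesis
    using Vector_Spaces.linear_iff vector_space_axioms by blast
qed

lemma dim_eq_dim_add_dim_orth:
  assumes "finite_dim sc E" "finite_dim sc F" "F \<subseteq> E"
  shows "dim E = dim F + dim (E \<inter> orth ip F)"
proof -
  have "orth_proj F ` E = F"
  proof
    show "orth_proj F ` E \<subseteq> F"
      using orth_proj[OF assms(2)] by blast
    have "orth_proj F f = f" if "f \<in> F" for f
      using orth_proj_eq[OF assms(2) that] subspace_0[OF subspace_orth] by simp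
    then show "F \<subseteq> orth_proj F ` E"
      using assms(3) by (metis image_eqI subsetD subsetI)
  qed
  moreover have "orth_proj F x = 0 \<longleftrightarrow> x \<in> orth ip F" for x
    using orth_proj(2)[OF assms(2), of x] orth_proj_eq[OF assms(2), of 0 x]
      subspace_0[OF finite_dim_subspace[OF assms(2)]]
    by auto
  then have "{x \<in> E. orth_proj F x = 0} = E \<inter> orth ip F"
    by blast
  ultimately show ?thesis
    using rank_nullity[OF linear_orth_proj[OF assms(2)] assms(1)] by simp
qed

subsection \<open>Unitary operators\<close>

lemma unitary_op_linear: "unitary_op sc ip u \<Longrightarrow> Vector_Spaces.linear sc sc u"
  unfolding unitary_op_def by simp

lemma unitary_op_ip: "unitary_op sc ip u \<Longrightarrow> ip (u x) (u y) = ip x y"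
  unfolding unitary_op_def by simp

lemma unitary_op_surj: "unitary_op sc ip u \<Longrightarrow> \<exists>w. t = u w"
  unfolding unitary_op_def by (metis bij_pointE)

lemma linear_diff_fun:
  "Vector_Spaces.linear sc sc f \<Longrightarrow> Vector_Spaces.linear sc sc g \<Longrightarrow>
    Vector_Spaces.linear sc sc (\<lambda>x. f x - g x)"
  unfolding Vector_Spaces.linear_iff by (simp add: scale_right_diff_distrib algebra_simps)

lemma fixes_perp_mono: "fixes_perp ip u E \<Longrightarrow> E \<subseteq> E' \<Longrightarrow> fixes_perp ip u E'"
  unfolding fixes_perp_def using orth_antimono by blast

lemma unitary_fixes_perp_maps_into:
  assumes "finite_dim sc F" "unitary_op sc ip w" "fixes_perp ip w F" "f \<in> F"
  shows "w f \<in> F"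
proof -
  have "ip y (w f) = 0" if "y \<in> orth ip F" for y
    using assms(3) that unitary_op_ip[OF assms(2), of y f] orthD'[OF that assms(4)]
    unfolding fixes_perp_def by simp
  then have "w f \<in> orth ip (orth ip F)"
    unfolding orth_def by blast
  then show ?thesis
    using orth_orth_subset[OF assms(1)] by blast
qed

lemma range_diff_eq_image_if_fixes_perp:
  assumes "finite_dim sc E" "Vector_Spaces.linear sc sc u" "Vector_Spaces.linear sc sc v"
    and "fixes_perp ip u E" "fixes_perp ip v E"
  shows "range (\<lambda>x. u x - v x) = (\<lambda>x. u x - v x) ` E"
proof -
  interpret D: Vector_Spaces.linear sc sc "\<lambda>x. u x - v x"
    using linear_diff_fun assms(2,3) .
  have "u x - v x \<in> (\<lambda>x. u x - v x) ` E" for x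
  proof -
    obtain e where e: "e \<in> E" "x - e \<in> orth ip E"
      using orth_decomposition[OF assms(1)] by blast
    then have "u (x - e) - v (x - e) = 0"
      using assms(4,5) unfolding fixes_perp_def by simp
    then have "u x - v x = u e - v e"
      using D.diff[of x e] by simp
    then show ?thesis
      using e(1) by blast
  qed
  then show ?thesis
    by blast
qed

lemma finite_dim_range_diff_if_fixes_perp:
  assumes "finite_dim sc E" "Vector_Spaces.linear sc sc u" "Vector_Spaces.linear sc sc v"
    and "fixes_perp ip u E" "fixes_perp ip v E"
  shows "finite_dim sc (range (\<lambda>x. u x - v x))"
  unfolding range_diff_eq_image_if_fixes_perp[OF assms]
  using finite_dim_image[OF linear_diff_fun[OF assms(2,3)] assms(1)] .

lemma finite_dim_range_diff_U0:
  assumes "u \<in> U0 sc ip" "v \<in> U0 sc ip"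
  shows "finite_dim sc (range (\<lambda>x. u x - v x))"
proof -
  obtain E1 E2 where E: "finite_dim sc E1" "fixes_perp ip u E1" "finite_dim sc E2" "fixes_perp ip v E2"
    using assms unfolding U0_def fin_dim_subspace_iff by blast
  have "E1 \<subseteq> span (E1 \<union> E2)" "E2 \<subseteq> span (E1 \<union> E2)"
    using span_superset by blast+
  then have "fixes_perp ip u (span (E1 \<union> E2))" "fixes_perp ip v (span (E1 \<union> E2))"
    using fixes_perp_mono E(2,4) by blast+
  moreover have "finite_dim sc (span (E1 \<union> E2))"
    using finite_dim_span_Un E(1,3) by blast
  ultimately show ?thesis
    using finite_dim_range_diff_if_fixes_perp unitary_op_linear assms unfolding U0_def by blast
qed

lemma dist_rank_metric:
  assumes "u \<in> U0 sc ip" "v \<in> U0 sc ip"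
  shows "fin_dim_subspace sc (range (\<lambda>x. u x - v x)) \<and>
    (dist_rank sc u v = 0 \<longleftrightarrow> u = v) \<and>
    dist_rank sc u v = dist_rank sc v u \<and>
    (\<forall>w\<in>U0 sc ip. dist_rank sc u w \<le> dist_rank sc u v + dist_rank sc v w)"
proof (intro conjI ballI)
  show "fin_dim_subspace sc (range (\<lambda>x. u x - v x))"
    using finite_dim_range_diff_U0[OF assms] unfolding fin_dim_subspace_iff .
  show "dist_rank sc u v = 0 \<longleftrightarrow> u = v"
    unfolding dist_rank_def by (rule dim_range_diff_0_iff[OF finite_dim_range_diff_U0[OF assms]])
  show "dist_rank sc u v = dist_rank sc v u"
    unfolding dist_rank_def by (rule dim_range_diff_commute)
  fix w assume "w \<in> U0 sc ip"
  then show "dist_rank sc u w \<le> dist_rank sc u v + dist_rank sc v w"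
    unfolding dist_rank_def
    by (intro dim_range_diff_triangle finite_dim_range_diff_U0 assms)
qed

end

subsection \<open>The nearest unitary fixing \<open>F\<^sup>\<perp>\<close>\<close>

locale pi_EF_setting = complex_inner_space sc ip
  for sc :: "complex \<Rightarrow> 'a::ab_group_add \<Rightarrow> 'a" and ip +
  fixes E F u
  assumes finite_dim_E: "finite_dim sc E" and finite_dim_F: "finite_dim sc F" and F_subset_E: "F \<subseteq> E"
    and unitary_u: "unitary_op sc ip u" and fixes_perp_u: "fixes_perp ip u E"
begin

definition displacement :: "'a set" where
  "displacement = (\<lambda>x. u x - x) ` orth ip F"

interpretation u: Vector_Spaces.linear sc sc u
  by (rule unitary_op_linear[OF unitary_u])

lemma linear_u_minus_id: "Vector_Spaces.linear sc sc (\<lambda>x. u x - x)"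
  using linear_diff_fun[OF unitary_op_linear[OF unitary_u] linear_ident] .

lemma subspace_F: "subspace F"
  using finite_dim_subspace[OF finite_dim_F] .

lemma displacement_eq_image: "displacement = (\<lambda>x. u x - x) ` (E \<inter> orth ip F)"
proof
  show "(\<lambda>x. u x - x) ` (E \<inter> orth ip F) \<subseteq> displacement"
    unfolding displacement_def by blast
  show "displacement \<subseteq> (\<lambda>x. u x - x) ` (E \<inter> orth ip F)"
  proof
    fix y assume "y \<in> displacement"
    then obtain x where x: "x \<in> orth ip F" "y = u x - x"
      unfolding displacement_def by blast
    obtain e where e: "e \<in> E" "x - e \<in> orth ip E"
      using orth_decomposition[OF finite_dim_E] by blast
    have "x - e \<in> orth ip F"
      using e(2) orth_antimono[OF F_subset_E] by blast
    then have "e \<in> orth ip F"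
      using subspace_diff[OF subspace_orth x(1)] by force
    moreover have "u x - x = u e - e"
      using fixes_perp_u e(2) u.diff[of x e] unfolding fixes_perp_def by (simp add: algebra_simps)
    ultimately show "y \<in> (\<lambda>x. u x - x) ` (E \<inter> orth ip F)"
      using x(2) e(1) by blast
  qed
qed

lemma finite_dim_displacement: "finite_dim sc displacement"
proof -
  have "subspace (E \<inter> orth ip F)"
    using subspace_inter[OF finite_dim_subspace[OF finite_dim_E] subspace_orth] .
  then show ?thesis
    unfolding displacement_eq_image
    using finite_dim_image[OF linear_u_minus_id] finite_dim_subset[OF finite_dim_E] by blast
qed

lemma subspace_displacement: "subspace displacement"
  using finite_dim_subspace[OF finite_dim_displacement] .

text \<open>If \<open>u x = x + v\<close> with \<open>x \<in> F\<^sup>\<perp>\<close> and \<open>v \<in> F\<close>, Pythagoras gives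
  \<open>\<parallel>x\<parallel>\<^sup>2 = \<parallel>x\<parallel>\<^sup>2 + \<parallel>v\<parallel>\<^sup>2\<close>.\<close>

lemma F_Int_displacement: "v \<in> F \<Longrightarrow> v \<in> displacement \<Longrightarrow> v = 0"
proof -
  assume v: "v \<in> F" "v \<in> displacement"
  then obtain x where x: "x \<in> orth ip F" "u x = x + v"
    unfolding displacement_def by auto
  have "ip x x = ip (v + x) (v + x)"
    using unitary_op_ip[OF unitary_u, of x x] x(2) by (simp add: add.commute)
  also have "\<dots> = ip v v + ip x x"
    using ip_add_orth[OF v(1) v(1) x(1) x(1)] .
  finally show "v = 0"
    by simp
qed

lemma fixed_if_orth_F_displacement:
  assumes t: "t \<in> orth ip F" "t \<in> orth ip displacement"
  shows "u t = t"
proof -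
  obtain w where w: "t = u w"
    using unitary_op_surj[OF unitary_u] by blast
  have "ip x (w - t) = 0" if x: "x \<in> orth ip F" for x
  proof -
    have "ip t (u x - x) = 0"
      using orthD'[OF t(2)] x unfolding displacement_def by blast
    then show ?thesis
      using unitary_op_ip[OF unitary_u, of w x] w ip_cnj_commute[of x]
      by (simp add: ip_simps)
  qed
  then have "w - t \<in> F"
    using orth_orth_subset[OF finite_dim_F] unfolding orth_def by blast
  then have "ip w w = ip (w - t) (w - t) + ip t t"
    using ip_add_orth[of "w - t" F "w - t" t t] t(1) by simp
  moreover have "ip t t = ip w w"
    using w unitary_op_ip[OF unitary_u] by simp
  ultimately show ?thesis
    using w by simp
qed

text \<open>The component of \<open>u f\<close> orthogonal to \<open>F + displacement\<close> is fixed by \<open>u\<close>, hence orthogonal to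
  \<open>u f\<close> itself.\<close>

lemma u_F_subset_F_plus_displacement:
  assumes f: "f \<in> F"
  shows "\<exists>a\<in>F. \<exists>b\<in>displacement. u f = a + b"
proof -
  let ?W = "span (F \<union> displacement)"
  obtain s where s: "s \<in> ?W" "u f - s \<in> orth ip ?W"
    using orth_decomposition[OF finite_dim_span_Un[OF finite_dim_F finite_dim_displacement]]
    by blast
  define t where "t = u f - s"
  have "t \<in> orth ip F" "t \<in> orth ip displacement"
    using s(2) orth_antimono[of F "F \<union> displacement"]
      orth_antimono[of displacement "F \<union> displacement"]
    unfolding t_def orth_span by blast+
  then have "ip t (u f) = 0"
    using fixed_if_orth_F_displacement unitary_op_ip[OF unitary_u, of t f] orthD'[OF _ f]
    by metis
  moreover have "ip t s = 0"
    using orthD'[OF s(2) s(1)] t_def by simp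
  ultimately have "ip t t = 0"
    unfolding t_def by (simp add: ip_simps)
  then have "u f \<in> ?W"
    using s(1) t_def by simp
  moreover have "span F = F" "span displacement = displacement"
    using subspace_F subspace_displacement by simp_all
  ultimately show ?thesis
    unfolding span_Un by auto
qed

lemma ex1_pi_map: "\<exists>!z. z - x \<in> F \<and> u x - z \<in> displacement"
proof (rule ex_ex1I)
  obtain f where f: "f \<in> F" "x - f \<in> orth ip F"
    using orth_decomposition[OF finite_dim_F] by blast
  obtain a b where ab: "a \<in> F" "b \<in> displacement" "u f = a + b"
    using u_F_subset_F_plus_displacement[OF f(1)] by blast
  have "u (x - f) - (x - f) \<in> displacement"
    unfolding displacement_def using f(2) by blast
  then have "b + (u (x - f) - (x - f)) \<in> displacement"
    using subspace_add[OF subspace_displacement ab(2)] by blast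
  moreover have "u x = a + b + u (x - f)"
    using ab(3) u.add[of f "x - f"] by simp
  then have "u x - (a + (x - f)) = b + (u (x - f) - (x - f))"
    by (simp add: algebra_simps)
  ultimately have "u x - (a + (x - f)) \<in> displacement"
    by (simp only:)
  moreover have "a + (x - f) - x \<in> F"
    using subspace_diff[OF subspace_F ab(1) f(1)] by simp
  ultimately show "\<exists>z. z - x \<in> F \<and> u x - z \<in> displacement"
    by blast
next
  fix z z'
  assume "z - x \<in> F \<and> u x - z \<in> displacement" "z' - x \<in> F \<and> u x - z' \<in> displacement"
  then have "(z - x) - (z' - x) \<in> F" "(u x - z') - (u x - z) \<in> displacement"
    using subspace_diff[OF subspace_F] subspace_diff[OF subspace_displacement] by blast+
  then show "z = z'"
    using F_Int_displacement[of "z - z'"] by simp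
qed

definition pi_map :: "'a \<Rightarrow> 'a" where
  "pi_map x = (THE z. z - x \<in> F \<and> u x - z \<in> displacement)"

lemma pi_map: "pi_map x - x \<in> F" "u x - pi_map x \<in> displacement"
  using theI'[OF ex1_pi_map] unfolding pi_map_def by blast+

lemma pi_map_eq: "z - x \<in> F \<Longrightarrow> u x - z \<in> displacement \<Longrightarrow> pi_map x = z"
  using ex1_pi_map pi_map by blast

lemma linear_pi_map: "Vector_Spaces.linear sc sc pi_map"
proof -
  have "pi_map (x + y) = pi_map x + pi_map y" for x y
  proof (rule pi_map_eq)
    show "pi_map x + pi_map y - (x + y) \<in> F"
      using subspace_add[OF subspace_F pi_map(1) pi_map(1)] by (simp add: algebra_simps)
    show "u (x + y) - (pi_map x + pi_map y) \<in> displacement"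
      using subspace_add[OF subspace_displacement pi_map(2) pi_map(2)]
      by (simp add: u.add algebra_simps)
  qed
  moreover have "pi_map (sc c x) = sc c (pi_map x)" for c x
  proof (rule pi_map_eq)
    show "sc c (pi_map x) - sc c x \<in> F"
      using subspace_scale[OF subspace_F pi_map(1)] by (simp add: scale_right_diff_distrib)
    show "u (sc c x) - sc c (pi_map x) \<in> displacement"
      using subspace_scale[OF subspace_displacement pi_map(2)]
      by (simp add: u.scale scale_right_diff_distrib)
  qed
  ultimately show ?thesis
    using Vector_Spaces.linear_iff vector_space_axioms by blast
qed

interpretation pi_map: Vector_Spaces.linear sc sc pi_map
  by (rule linear_pi_map)

lemma pi_map_orth_F: "x \<in> orth ip F \<Longrightarrow> pi_map x = x"
  using pi_map_eq[of x x] subspace_0[OF subspace_F] unfolding displacement_def by auto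

lemma pi_map_F:
  assumes "f \<in> F"
  shows "pi_map f \<in> F"
  using subspace_add[OF subspace_F pi_map(1)[of f] assms] by simp

text \<open>For \<open>f \<in> F\<close> write \<open>u f - \<pi> f = u g - g\<close> with \<open>g \<in> F\<^sup>\<perp>\<close>; then
  \<open>\<pi> f - g = u (f - g)\<close>, and both sides split orthogonally along \<open>F \<oplus> F\<^sup>\<perp>\<close>.\<close>

lemma ip_pi_map_F:
  assumes f: "f \<in> F" "f' \<in> F"
  shows "ip (pi_map f) (pi_map f') = ip f f'"
proof -
  have "\<exists>g\<in>orth ip F. u (f - g) = pi_map f + - g" if "f \<in> F" for f
  proof -
    obtain g where g: "g \<in> orth ip F" "u f - pi_map f = u g - g"
      using pi_map(2)[of f] unfolding displacement_def by blast
    have "u (f - g) = (u f - pi_map f) - (u g - g) + (pi_map f + - g)"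
      by (simp add: u.diff algebra_simps)
    also have "\<dots> = pi_map f + - g"
      using g(2) by simp
    finally show ?thesis
      using g(1) by blast
  qed
  then obtain g g' where g: "g \<in> orth ip F" "u (f - g) = pi_map f + - g"
    and g': "g' \<in> orth ip F" "u (f' - g') = pi_map f' + - g'"
    using f by meson
  have ng: "- g \<in> orth ip F" "- g' \<in> orth ip F"
    using subspace_neg[OF subspace_orth] g(1) g'(1) by blast+
  have "ip (pi_map f) (pi_map f') + ip (- g) (- g') = ip (pi_map f + - g) (pi_map f' + - g')"
    using ip_add_orth[OF pi_map_F[OF f(1)] pi_map_F[OF f(2)] ng] by simp
  also have "\<dots> = ip (f - g) (f' - g')"
    using g(2) g'(2) unitary_op_ip[OF unitary_u, of "f - g" "f' - g'"] by simp
  also have "\<dots> = ip f f' + ip (- g) (- g')"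
    using ip_add_orth[OF f ng] by simp
  finally show ?thesis
    by simp
qed

lemma ip_pi_map: "ip (pi_map x) (pi_map y) = ip x y"
proof -
  obtain f f' where f: "f \<in> F" "x - f \<in> orth ip F" and f': "f' \<in> F" "y - f' \<in> orth ip F"
    using orth_decomposition[OF finite_dim_F] by meson
  have "pi_map x = pi_map f + (x - f)" "pi_map y = pi_map f' + (y - f')"
    using pi_map.add[of f "x - f"] pi_map.add[of f' "y - f'"] pi_map_orth_F f(2) f'(2) by simp_all
  then have "ip (pi_map x) (pi_map y) = ip f f' + ip (x - f) (y - f')"
    using ip_add_orth[OF pi_map_F[OF f(1)] pi_map_F[OF f'(1)] f(2) f'(2)] ip_pi_map_F[OF f(1) f'(1)]
    by simp
  also have "\<dots> = ip x y"
    using ip_add_orth[OF f(1) f'(1) f(2) f'(2)] by simp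
  finally show ?thesis .
qed

lemma inj_pi_map: "inj pi_map"
  unfolding pi_map.inj_iff_eq_0
proof (intro allI impI)
  fix x assume "pi_map x = 0"
  then show "x = 0"
    using ip_pi_map[of x x] by simp
qed

lemma pi_map_image_F: "pi_map ` F = F"
proof (rule subspace_eq_if_dim_le[OF finite_dim_F])
  show "subspace (pi_map ` F)" "pi_map ` F \<subseteq> F"
    using pi_map.subspace_image[OF subspace_F] pi_map_F by auto
  have "{x \<in> F. pi_map x = 0} \<subseteq> {0}"
    using inj_pi_map pi_map.inj_iff_eq_0 by blast
  then have "dim {x \<in> F. pi_map x = 0} = 0"
    by (rule dim_eq_0_if_subset_zero)
  then show "dim F \<le> dim (pi_map ` F)"
    using rank_nullity[OF linear_pi_map finite_dim_F] by simp
qed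

lemma surj_pi_map: "surj pi_map"
proof -
  have "y \<in> range pi_map" for y
  proof -
    obtain f where f: "f \<in> F" "y - f \<in> orth ip F"
      using orth_decomposition[OF finite_dim_F] by blast
    obtain f' where "f' \<in> F" "f = pi_map f'"
      using pi_map_image_F f(1) by blast
    then have "pi_map (f' + (y - f)) = y"
      using pi_map.add[of f' "y - f"] pi_map_orth_F[OF f(2)] by simp
    then show ?thesis
      by (metis rangeI)
  qed
  then show ?thesis
    by blast
qed

lemma unitary_pi_map: "unitary_op sc ip pi_map"
  unfolding unitary_op_def bij_def using linear_pi_map ip_pi_map inj_pi_map surj_pi_map by blast

lemma fixes_perp_pi_map: "fixes_perp ip pi_map F"
  unfolding fixes_perp_def using pi_map_orth_F by blast

lemma displacement_subset_range_diff:
  assumes "fixes_perp ip w F"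
  shows "displacement \<subseteq> range (\<lambda>x. u x - w x)"
proof
  fix y assume "y \<in> displacement"
  then obtain x where "x \<in> orth ip F" "y = u x - x"
    unfolding displacement_def by blast
  then have "y = u x - w x"
    using assms unfolding fixes_perp_def by simp
  then show "y \<in> range (\<lambda>x. u x - w x)"
    by blast
qed

lemma range_diff_pi_map: "range (\<lambda>x. u x - pi_map x) = displacement"
  using pi_map(2) displacement_subset_range_diff[OF fixes_perp_pi_map] by blast

lemma eq_pi_map_if_range_diff_subset:
  assumes "unitary_op sc ip w" "fixes_perp ip w F" "range (\<lambda>x. u x - w x) \<subseteq> displacement"
  shows "w = pi_map"
proof
  fix x
  interpret w: Vector_Spaces.linear sc sc w
    using unitary_op_linear[OF assms(1)] .
  obtain f where f: "f \<in> F" "x - f \<in> orth ip F"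
    using orth_decomposition[OF finite_dim_F] by blast
  have "w (x - f) = x - f"
    using assms(2) f(2) unfolding fixes_perp_def by blast
  then have "w x - x = w f - f"
    using w.diff[of x f] by (simp add: algebra_simps)
  then have "w x - x \<in> F"
    using subspace_diff[OF subspace_F unitary_fixes_perp_maps_into[OF finite_dim_F assms(1,2) f(1)] f(1)]
    by simp
  then show "w x = pi_map x"
    using pi_map_eq assms(3) by (metis rangeI subsetD)
qed

lemma pi_EF_eq_pi_map: "pi_EF sc ip E F u = pi_map"
  unfolding pi_EF_def displacement_def[symmetric]
proof (rule the_equality)
  show "unitary_op sc ip pi_map \<and> fixes_perp ip pi_map F \<and>
      range (\<lambda>x. u x - pi_map x) \<subseteq> displacement"
    using unitary_pi_map fixes_perp_pi_map range_diff_pi_map by simp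
  show "w = pi_map" if "unitary_op sc ip w \<and> fixes_perp ip w F \<and>
      range (\<lambda>x. u x - w x) \<subseteq> displacement" for w
    using eq_pi_map_if_range_diff_subset that by blast
qed

lemma finite_dim_range_diff:
  "unitary_op sc ip w \<Longrightarrow> fixes_perp ip w F \<Longrightarrow> finite_dim sc (range (\<lambda>x. u x - w x))"
  using finite_dim_range_diff_if_fixes_perp[OF finite_dim_E unitary_op_linear[OF unitary_u] _ fixes_perp_u]
    unitary_op_linear fixes_perp_mono F_subset_E by blast

lemma dist_rank_pi_map_le:
  "unitary_op sc ip w \<Longrightarrow> fixes_perp ip w F \<Longrightarrow> dist_rank sc u pi_map \<le> dist_rank sc u w"
  unfolding dist_rank_def range_diff_pi_map
  using dim_le_finite_dim finite_dim_range_diff displacement_subset_range_diff by blast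

lemma dist_rank_pi_map_unique:
  assumes "unitary_op sc ip w" "fixes_perp ip w F" "dist_rank sc u w \<le> dist_rank sc u pi_map"
  shows "w = pi_map"
proof -
  have "displacement = range (\<lambda>x. u x - w x)"
    using subspace_eq_if_dim_le[OF finite_dim_range_diff[OF assms(1,2)] subspace_displacement]
      displacement_subset_range_diff[OF assms(2)] assms(3)
    unfolding dist_rank_def range_diff_pi_map by blast
  then show ?thesis
    using eq_pi_map_if_range_diff_subset assms(1,2) by simp
qed

lemma dist_rank_pi_map:
  "int (dist_rank sc u pi_map) =
    int (dim E) - int (dim F) - int (dim {x \<in> E \<inter> orth ip F. u x = x})"
proof -
  have "subspace (E \<inter> orth ip F)"
    using subspace_inter[OF finite_dim_subspace[OF finite_dim_E] subspace_orth] .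
  then have "dim (E \<inter> orth ip F) = dim displacement + dim {x \<in> E \<inter> orth ip F. u x = x}"
    using rank_nullity[OF linear_u_minus_id finite_dim_subset[OF finite_dim_E]]
    unfolding displacement_eq_image by auto
  then show ?thesis
    using dim_eq_dim_add_dim_orth[OF finite_dim_E finite_dim_F F_subset_E]
    unfolding dist_rank_def range_diff_pi_map by simp
qed

end

theorem proposition2p2:
  fixes sc :: "complex \<Rightarrow> 'a::ab_group_add \<Rightarrow> 'a"
    and ip :: "'a \<Rightarrow> 'a \<Rightarrow> complex"
  assumes H: "complex_hilbert_space sc ip"
  shows
    "(\<forall>u\<in>U0 sc ip. \<forall>v\<in>U0 sc ip.
        fin_dim_subspace sc (range (\<lambda>x. u x - v x)) \<and>
        (dist_rank sc u v = 0 \<longleftrightarrow> u = v) \<and>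
        dist_rank sc u v = dist_rank sc v u \<and>
        (\<forall>w\<in>U0 sc ip. dist_rank sc u w \<le> dist_rank sc u v + dist_rank sc v w))
     \<and>
     (\<forall>E F u. fin_dim_subspace sc E \<and> fin_dim_subspace sc F \<and> F \<subseteq> E \<and>
        unitary_op sc ip u \<and> fixes_perp ip u E \<longrightarrow>
        (let p = pi_EF sc ip E F u in
          unitary_op sc ip p \<and> fixes_perp ip p F \<and>
          (\<forall>w. unitary_op sc ip w \<and> fixes_perp ip w F \<longrightarrow> dist_rank sc u p \<le> dist_rank sc u w) \<and>
          (\<forall>w. unitary_op sc ip w \<and> fixes_perp ip w F \<and> dist_rank sc u w \<le> dist_rank sc u p \<longrightarrow> w = p) \<and>
          range (\<lambda>x. u x - p x) = (\<lambda>x. u x - x) ` orth ip F \<and>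
          int (dist_rank sc u p) = int (vector_space.dim sc E) - int (vector_space.dim sc F)
             - int (vector_space.dim sc {x \<in> E \<inter> orth ip F. u x = x}) \<and>
          ((\<forall>x\<in>E \<inter> orth ip F. u x = x \<longrightarrow> x = 0) \<longrightarrow>
             int (dist_rank sc u p) = int (vector_space.dim sc E) - int (vector_space.dim sc F))))"
proof -
  interpret complex_inner_space sc ip
    using complex_hilbert_space_imp_complex_inner_space[OF H] .
  show ?thesis
  proof (rule conjI, goal_cases)
    case 1
    show ?case
      by (intro ballI) (rule dist_rank_metric)
  next
    case 2
    show ?case
    proof (intro allI impI, goal_cases)
      case (1 E F u)
      then interpret pi_EF_setting sc ip E F u
        by unfold_locales (simp_all add: fin_dim_subspace_iff)
      have "dim {x \<in> E \<inter> orth ip F. u x = x} = 0" if "\<forall>x\<in>E \<inter> orth ip F. u x = x \<longrightarrow> x = 0"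
        using that by (intro dim_eq_0_if_subset_zero) blast
      then show ?case
        unfolding Let_def pi_EF_eq_pi_map displacement_def[symmetric]
        using unitary_pi_map fixes_perp_pi_map dist_rank_pi_map_le dist_rank_pi_map_unique
          range_diff_pi_map dist_rank_pi_map
        by (intro conjI allI impI) (blast | simp)+
    qed
  qed
qed

end
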